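(* Let $G=(V,E)$ be a graph and let $u_1\in V$ be a universal vertex (adjacent to all other vertices). (1) If $G$ has another universal vertex $u_2\neq u_1$, then the perfect dominating sets of $G$ are exactly $V$ and the singletons $\{u\}$ with $u$ a universal vertex of $G$. (2) If $u_1$ is the unique universal vertex of $G$, then every perfect dominating set of $G$ contains $u_1$. Moreover, let $G_1=(V_1,E_1),\dots,G_k=(V_k,E_k)$ be the connected components of $G-u_1$. Then (a) every perfect dominating set $D$ of $G$ satisfies, for each $i$ and each $w\in V_i$: $w\in D$ if and only if $V_i\subseteq D$ (i.e., each $V_i$ is either contained in $D$ or disjoint from $D$); and (b) every subset $V'\subseteq V$ that contains $u_1$ and satisfies the property in (a) is a perfect dominating set of $G$.
   Context: A perfect dominating set of a graph $G$ is a set $D\subseteq V(G)$ such that every vertex $v\in V(G)\setminus D$ is adjacent to exactly one vertex of $D$. *)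

theory Defs
  imports Main
begin

definition graph :: "'a set \<Rightarrow> ('a \<Rightarrow> 'a \<Rightarrow> bool) \<Rightarrow> bool" where
  "graph V E \<longleftrightarrow> finite V \<and> (\<forall>x y. E x y \<longrightarrow> x \<in> V \<and> y \<in> V)
     \<and> (\<forall>x y. E x y \<longrightarrow> E y x) \<and> (\<forall>x. \<not> E x x)"

definition universal :: "'a set \<Rightarrow> ('a \<Rightarrow> 'a \<Rightarrow> bool) \<Rightarrow> 'a \<Rightarrow> bool" where
  "universal V E u \<longleftrightarrow> u \<in> V \<and> (\<forall>v \<in> V. v \<noteq> u \<longrightarrow> E u v)"

definition perfect_dominating :: "'a set \<Rightarrow> ('a \<Rightarrow> 'a \<Rightarrow> bool) \<Rightarrow> 'a set \<Rightarrow> bool" where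
  "perfect_dominating V E D \<longleftrightarrow> D \<subseteq> V \<and> (\<forall>v \<in> V - D. \<exists>!d. d \<in> D \<and> E v d)"

definition comp_of :: "'a set \<Rightarrow> ('a \<Rightarrow> 'a \<Rightarrow> bool) \<Rightarrow> 'a \<Rightarrow> 'a set" where
  "comp_of S E w = {x. (\<lambda>a b. a \<in> S \<and> b \<in> S \<and> E a b)\<^sup>*\<^sup>* w x}"

definition components :: "'a set \<Rightarrow> ('a \<Rightarrow> 'a \<Rightarrow> bool) \<Rightarrow> 'a set set" where
  "components S E = {comp_of S E w | w. w \<in> S}"

end

theory Submission
  imports Defs
begin

text \<open>A universal vertex outside a perfect dominating set D has exactly one neighbour in D, and
  since it is adjacent to everything, D is that single vertex, which must then dominate all
  of V. With a universal vertex u inside D, every vertex outside D already has u as its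
  neighbour in D, so it may have no other; hence D cannot separate two adjacent vertices of
  G - u, i.e. D is a union of components of G - u, and conversely every such D containing u
  is perfect dominating.\<close>

lemma graph_sym: "graph V E \<Longrightarrow> E a b \<Longrightarrow> E b a"
  unfolding graph_def by blast

lemma graph_in_vertices: "graph V E \<Longrightarrow> E a b \<Longrightarrow> a \<in> V \<and> b \<in> V"
  unfolding graph_def by blast

lemma universal_adj:
  "graph V E \<Longrightarrow> universal V E u \<Longrightarrow> v \<in> V \<Longrightarrow> v \<noteq> u \<Longrightarrow> E v u"
  unfolding universal_def by (blast intro: graph_sym)

lemma perfect_dominating_vertices: "perfect_dominating V E V"
  unfolding perfect_dominating_def by blast

lemma perfect_dominating_universal_singleton:
  assumes "graph V E" and "universal V E u"
  shows "perfect_dominating V E {u}"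
  using assms universal_adj[OF assms] unfolding perfect_dominating_def universal_def by blast

lemma perfect_dominating_singleton_if_universal_notin:
  assumes g: "graph V E" and u: "universal V E u"
    and pd: "perfect_dominating V E D" and "u \<notin> D"
  obtains d where "D = {d}" and "universal V E d"
proof -
  have DV: "D \<subseteq> V" and uq: "\<And>v. v \<in> V - D \<Longrightarrow> \<exists>!d. d \<in> D \<and> E v d"
    using pd unfolding perfect_dominating_def by auto
  obtain d where d: "d \<in> D" "E u d"
    using uq[of u] u \<open>u \<notin> D\<close> unfolding universal_def by blast
  have "E u d'" if "d' \<in> D" for d'
    using u that DV \<open>u \<notin> D\<close> unfolding universal_def by auto
  with uq[of u] u \<open>u \<notin> D\<close> d have single: "D = {d}"
    unfolding universal_def by blast
  have "E d w" if "w \<in> V" "w \<noteq> d" for w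
    using uq[of w] that single by (auto intro: graph_sym[OF g])
  with d DV have "universal V E d"
    unfolding universal_def by blast
  with single show thesis by (rule that)
qed

lemma perfect_dominating_two_universal:
  assumes g: "graph V E" and u1: "universal V E u1" and u2: "universal V E u2"
    and "u1 \<noteq> u2" and pd: "perfect_dominating V E D"
  shows "D = V \<or> (\<exists>u. universal V E u \<and> D = {u})"
proof (cases "u1 \<in> D \<and> u2 \<in> D")
  case True
  have "v \<in> D" if "v \<in> V" for v
  proof (rule ccontr)
    assume "v \<notin> D"
    with True that have "E v u1" "E v u2"
      using universal_adj[OF g u1] universal_adj[OF g u2] by blast+
    with True \<open>u1 \<noteq> u2\<close> \<open>v \<notin> D\<close> that pd show False
      unfolding perfect_dominating_def by blast
  qed
  with pd show ?thesis
    unfolding perfect_dominating_def by blast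
next
  case False
  then show ?thesis
    using perfect_dominating_singleton_if_universal_notin[OF g _ pd] u1 u2 by metis
qed

lemma perfect_dominating_contains_unique_universal:
  assumes "graph V E" and "universal V E u"
    and "\<And>v. universal V E v \<Longrightarrow> v = u" and "perfect_dominating V E D"
  shows "u \<in> D"
  using perfect_dominating_singleton_if_universal_notin[OF assms(1,2,4)] assms(3) by blast

lemma perfect_dominating_edge_closed_off_universal:
  assumes g: "graph V E" and u: "universal V E u" and pd: "perfect_dominating V E D"
    and "u \<in> D" and "a \<in> V - {u}" and "b \<in> V - {u}" and "E a b" and "a \<in> D"
  shows "b \<in> D"
proof (rule ccontr)
  assume "b \<notin> D"
  moreover have "E b u" "E b a"
    using universal_adj[OF g u] graph_sym[OF g] assms(6,7) by blast+
  ultimately show False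
    using pd assms(4,5,6,8) unfolding perfect_dominating_def by blast
qed

lemma components_subset_or_disjoint:
  assumes closed: "\<And>a b. a \<in> S \<Longrightarrow> b \<in> S \<Longrightarrow> E a b \<Longrightarrow> a \<in> D \<longleftrightarrow> b \<in> D"
    and "C \<in> components S E" and "w \<in> C"
  shows "w \<in> D \<longleftrightarrow> C \<subseteq> D"
proof -
  obtain w0 where C: "C = comp_of S E w0"
    using assms(2) unfolding components_def by blast
  have "w0 \<in> D \<longleftrightarrow> x \<in> D" if "(\<lambda>a b. a \<in> S \<and> b \<in> S \<and> E a b)\<^sup>*\<^sup>* w0 x" for x
    using that by (induction rule: rtranclp_induct) (use closed in blast)+
  with C assms(3) show ?thesis
    unfolding comp_of_def by blast
qed

lemma perfect_dominating_components_subset_or_disjoint: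
  assumes g: "graph V E" and u: "universal V E u"
    and pd: "perfect_dominating V E D" and "u \<in> D"
    and "C \<in> components (V - {u}) E" and "w \<in> C"
  shows "w \<in> D \<longleftrightarrow> C \<subseteq> D"
proof (rule components_subset_or_disjoint[OF _ assms(5,6)])
  fix a b assume "a \<in> V - {u}" "b \<in> V - {u}" "E a b"
  then show "a \<in> D \<longleftrightarrow> b \<in> D"
    using perfect_dominating_edge_closed_off_universal[OF g u pd \<open>u \<in> D\<close>] graph_sym[OF g]
    by blast
qed

lemma perfect_dominating_if_components_subset_or_disjoint:
  assumes g: "graph V E" and u: "universal V E u" and "D \<subseteq> V" and "u \<in> D"
    and closed: "\<forall>C \<in> components (V - {u}) E. \<forall>w \<in> C. w \<in> D \<longleftrightarrow> C \<subseteq> D"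
  shows "perfect_dominating V E D"
  unfolding perfect_dominating_def
proof (intro conjI ballI)
  fix v assume v: "v \<in> V - D"
  show "\<exists>!d. d \<in> D \<and> E v d"
  proof (rule ex1I[of _ u])
    show "u \<in> D \<and> E v u"
      using v \<open>u \<in> D\<close> universal_adj[OF g u] by blast
  next
    fix d assume d: "d \<in> D \<and> E v d"
    show "d = u"
    proof (rule ccontr)
      assume "d \<noteq> u"
      let ?C = "comp_of (V - {u}) E v"
      have "?C \<in> components (V - {u}) E"
        using v \<open>u \<in> D\<close> unfolding components_def by blast
      moreover have "v \<in> ?C" "d \<in> ?C"
        using d \<open>d \<noteq> u\<close> v \<open>u \<in> D\<close> graph_in_vertices[OF g]
        unfolding comp_of_def by auto
      ultimately show False
        using closed d v by blast
    qed
  qed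
qed fact

theorem lemma5:
  assumes "graph V E" and "universal V E u1"
  shows "((\<exists>u2. universal V E u2 \<and> u2 \<noteq> u1) \<longrightarrow>
           (\<forall>D. perfect_dominating V E D \<longleftrightarrow> D = V \<or> (\<exists>u. universal V E u \<and> D = {u})))
       \<and> ((\<forall>u. universal V E u \<longrightarrow> u = u1) \<longrightarrow>
           (\<forall>D. perfect_dominating V E D \<longrightarrow> u1 \<in> D)
         \<and> (\<forall>D. perfect_dominating V E D \<longrightarrow>
               (\<forall>C \<in> components (V - {u1}) E. \<forall>w \<in> C. w \<in> D \<longleftrightarrow> C \<subseteq> D))
         \<and> (\<forall>D. D \<subseteq> V \<and> u1 \<in> D \<and>
               (\<forall>C \<in> components (V - {u1}) E. \<forall>w \<in> C. w \<in> D \<longleftrightarrow> C \<subseteq> D)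
               \<longrightarrow> perfect_dominating V E D))"
proof (intro conjI impI allI ballI)
  fix D assume "\<exists>u2. universal V E u2 \<and> u2 \<noteq> u1"
  then show "perfect_dominating V E D \<longleftrightarrow> D = V \<or> (\<exists>u. universal V E u \<and> D = {u})"
    using perfect_dominating_two_universal[OF assms] perfect_dominating_vertices
      perfect_dominating_universal_singleton[OF assms(1)] by metis
next
  fix D assume unique: "\<forall>u. universal V E u \<longrightarrow> u = u1" and pd: "perfect_dominating V E D"
  then show u1D: "u1 \<in> D"
    using perfect_dominating_contains_unique_universal[OF assms] by blast
  fix C w assume "C \<in> components (V - {u1}) E" "w \<in> C"
  with u1D show "w \<in> D \<longleftrightarrow> C \<subseteq> D"
    using perfect_dominating_components_subset_or_disjoint[OF assms pd] by blast
next
  fix D assume "D \<subseteq> V \<and> u1 \<in> D \<and>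
    (\<forall>C \<in> components (V - {u1}) E. \<forall>w \<in> C. w \<in> D \<longleftrightarrow> C \<subseteq> D)"
  then show "perfect_dominating V E D"
    using perfect_dominating_if_components_subset_or_disjoint[OF assms] by blast
qed

end
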